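(* Let $d\ge2$ and let $\omega$ be any configuration of faces. For each finite open cluster $C^*$ of the dual bond configuration there is a unique hole $D$ of $K(\omega)$ with $D\cap(\mathbb{Z}^d)^*$ equal to the vertex set of $C^*$, and the map $C^*\mapsto D$ is a bijection between the finite open dual clusters and the holes. Moreover, under this bijection two holes $D,D'$ are adjacent if and only if the corresponding finite clusters $C^*,(C^* )'$ satisfy $\Delta C^*\cap\Delta (C^* )'\neq\emptyset$.
   Context: A face is a $(d-1)$-dimensional elementary cube in $\mathbb{R}^d$ (a product of intervals $[l,l]$ or $[l,l+1]$, $l\in\mathbb{Z}$, with exactly one degenerate factor). A configuration $\omega$ declares each face open or closed; $K(\omega)$ is the union of open faces. A hole is a bounded connected component of $\mathbb{R}^d\setminus K(\omega)$; two holes are adjacent iff some face is contained in the boundary of both. Dual lattice: vertices $(\mathbb{Z}^d)^*=\mathbb{Z}^d+(1/2,\dots,1/2)$, dual bonds $\langle x^*,y^*\rangle$ with $\|x^*-y^*\|_1=1$. Each dual bond $e^*$ meets exactly one face $Q_{e^*}$ (namely $Q_{e^*}=B_{x^*}\cap B_{y^*}$ where $B_{z^*}=\prod_i[(z^* )_i-1/2,(z^* )_i+1/2]$); the dual bond $e^*$ is declared open iff $Q_{e^*}$ is closed. An open dual cluster is a connected component (possibly a single vertex) of the graph on $(\mathbb{Z}^d)^*$ formed by open dual bonds. For a cluster $C^*$, $\Delta C^*$ is the set of dual bonds with exactly one endpoint in $C^*$. *)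

theory Defs
  imports "HOL-Analysis.Analysis"
begin

definition faces :: "(real^'n) set set" where
  "faces = {Q. \<exists>(l::int^'n) k. Q = {x. x$k = of_int (l$k) \<and>
      (\<forall>j. j \<noteq> k \<longrightarrow> of_int (l$j) \<le> x$j \<and> x$j \<le> of_int (l$j) + 1)}}"

text \<open>A configuration is a predicate omega on sets; only its values on faces matter
  (omega Q = True means the face Q is open).\<close>
definition Kset :: "((real^'n) set \<Rightarrow> bool) \<Rightarrow> (real^'n) set" where
  "Kset \<omega> = \<Union>{Q \<in> faces. \<omega> Q}"

definition hole :: "((real^'n) set \<Rightarrow> bool) \<Rightarrow> (real^'n) set \<Rightarrow> bool" where
  "hole \<omega> D \<longleftrightarrow> D \<in> components (- Kset \<omega>) \<and> bounded D"

definition adjacent_holes :: "((real^'n) set \<Rightarrow> bool) \<Rightarrow> (real^'n) set \<Rightarrow> (real^'n) set \<Rightarrow> bool" where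
  "adjacent_holes \<omega> D D' \<longleftrightarrow> (\<exists>Q\<in>faces. Q \<subseteq> frontier D \<and> Q \<subseteq> frontier D')"

definition dual_verts :: "(real^'n) set" where
  "dual_verts = {x. \<forall>i. x$i - 1/2 \<in> \<int>}"

definition dual_bond :: "real^'n \<Rightarrow> real^'n \<Rightarrow> bool" where
  "dual_bond x y \<longleftrightarrow> x \<in> dual_verts \<and> y \<in> dual_verts \<and> (\<Sum>i\<in>UNIV. \<bar>x$i - y$i\<bar>) = 1"

definition dual_box :: "real^'n \<Rightarrow> (real^'n) set" where
  "dual_box z = cbox (z - (\<chi> i. 1/2)) (z + (\<chi> i. 1/2))"

definition bond_face :: "real^'n \<Rightarrow> real^'n \<Rightarrow> (real^'n) set" where
  "bond_face x y = dual_box x \<inter> dual_box y"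

definition open_dual_bond :: "((real^'n) set \<Rightarrow> bool) \<Rightarrow> real^'n \<Rightarrow> real^'n \<Rightarrow> bool" where
  "open_dual_bond \<omega> x y \<longleftrightarrow> dual_bond x y \<and> \<not> \<omega> (bond_face x y)"

definition dual_cluster :: "((real^'n) set \<Rightarrow> bool) \<Rightarrow> real^'n \<Rightarrow> (real^'n) set" where
  "dual_cluster \<omega> x = {y. (open_dual_bond \<omega>)\<^sup>*\<^sup>* x y}"

definition finite_dual_clusters :: "((real^'n) set \<Rightarrow> bool) \<Rightarrow> (real^'n) set set" where
  "finite_dual_clusters \<omega> = {C. (\<exists>x\<in>dual_verts. C = dual_cluster \<omega> x) \<and> finite C}"

definition edge_boundary :: "(real^'n) set \<Rightarrow> (real^'n) set set" where
  "edge_boundary C = {{x, y} | x y. dual_bond x y \<and> x \<in> C \<and> y \<notin> C}"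

definition hole_of :: "((real^'n) set \<Rightarrow> bool) \<Rightarrow> (real^'n) set \<Rightarrow> (real^'n) set" where
  "hole_of \<omega> C = (THE D. hole \<omega> D \<and> D \<inter> dual_verts = C)"

end

theory Submission
  imports Defs
begin

text \<open>
  Every point of \<open>\<real>\<^sup>d\<close> lies in a closed dual box \<open>B\<^sub>w\<close>, and the open box around a dual
  vertex \<open>w\<close> misses \<open>K\<close> (no coordinate is an integer), so every component of the
  complement of \<open>K\<close> is the component of a dual vertex. An open dual bond joins its endpoints
  through the midpoint of its closed face, which lies on no other face; conversely, two dual
  boxes sharing a point off \<open>K\<close> are joined by a path of open dual bonds. As lattice boxes are
  locally finite, being covered by a box of the cluster of \<open>z\<close> is locally constant on the
  component \<open>D\<close> of \<open>z\<close>, hence \<open>D\<close> is covered by these boxes and meets the dual lattice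
  exactly in the cluster; so \<open>D\<close> is bounded iff the cluster is finite. A face in the common
  frontier of two holes contains its centre, whose free coordinates are half-integers; the
  dual vertices of the two holes whose boxes contain the centre form a bond lying in both edge
  boundaries.
  Conversely the face of a common boundary bond is open, and each of its points lies in the
  frontier of both holes.
\<close>

section \<open>Integers and half-integers\<close>

lemma abs_le_half_both_iff:
  fixes a b t :: real
  assumes "\<bar>a - b\<bar> = 1"
  shows "\<bar>t - a\<bar> \<le> 1/2 \<and> \<bar>t - b\<bar> \<le> 1/2 \<longleftrightarrow> t = (a + b) / 2"
proof -
  have "b = a + 1 \<or> b = a - 1" using assms by arith
  then show ?thesis unfolding abs_le_iff by (elim disjE) (auto simp: field_simps)
qed

lemma not_Ints_near_half_integer:
  fixes x y :: real
  assumes "x - 1/2 \<in> \<int>" "\<bar>y - x\<bar> < 1/2"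
  shows "y \<notin> \<int>"
proof
  assume "y \<in> \<int>"
  then have "y - (x - 1/2) \<in> \<int>" using assms(1) by (rule Ints_diff)
  moreover have "0 < y - (x - 1/2)" "\<bar>y - (x - 1/2)\<bar> < 1" using assms(2) by arith+
  ultimately show False using Ints_nonzero_abs_less1 by fastforce
qed

lemma floor_half_integer:
  fixes t :: real
  assumes "t - 1/2 \<in> \<int>"
  shows "of_int \<lfloor>t\<rfloor> = t - 1/2"
proof -
  obtain n where n: "t - 1/2 = of_int n" using assms by (auto elim: Ints_cases)
  then have "\<lfloor>t\<rfloor> = n" by (intro floor_unique) linarith+
  then show ?thesis using n by simp
qed

lemma floor_eq_if_not_Ints:
  fixes t :: real
  assumes "of_int n \<le> t" "t \<le> of_int n + 1" "t \<notin> \<int>"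
  shows "n = \<lfloor>t\<rfloor>"
proof -
  have "t \<noteq> of_int (n + 1)" using assms(3) Ints_of_int by metis
  then have "t < of_int n + 1" using assms(2) by simp
  then show ?thesis using assms(1) by (simp add: floor_unique)
qed

lemma eventually_nhds_Ints_same_side:
  fixes t :: real
  shows "\<forall>\<^sub>F s in nhds t. \<forall>m\<in>\<int>. (s \<le> m \<longrightarrow> t \<le> m) \<and> (m \<le> s \<longrightarrow> m \<le> t)"
proof -
  obtain \<delta> where "\<delta> > 0" and \<delta>: "\<And>m. m \<in> \<int> - {t} \<Longrightarrow> \<delta> \<le> dist t m"
    using separate_point_closed[of "\<int> - {t}" t] closed_subset_Ints by blast
  have "(s \<le> m \<longrightarrow> t \<le> m) \<and> (m \<le> s \<longrightarrow> m \<le> t)"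
    if "dist s t < \<delta>" "m \<in> \<int>" for s m
  proof -
    have "m = t \<or> \<bar>t - s\<bar> < \<bar>t - m\<bar>"
      using that \<delta>[of m] by (force simp: dist_real_def)
    then show ?thesis by auto
  qed
  then show ?thesis
    unfolding eventually_nhds_metric using \<open>\<delta> > 0\<close> by blast
qed

lemma eventually_nhds_integral_cbox:
  fixes p :: "real^'n"
  shows "\<forall>\<^sub>F y in nhds p. \<forall>a b. (\<forall>i. a$i \<in> \<int> \<and> b$i \<in> \<int>) \<longrightarrow> y \<in> cbox a b \<longrightarrow> p \<in> cbox a b"
proof -
  have "\<forall>\<^sub>F y in nhds p. \<forall>m\<in>\<int>. (y$i \<le> m \<longrightarrow> p$i \<le> m) \<and> (m \<le> y$i \<longrightarrow> m \<le> p$i)" for i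
    by (rule eventually_compose_filterlim[OF eventually_nhds_Ints_same_side])
       (intro tendsto_vec_nth filterlim_ident)
  then have "\<forall>\<^sub>F y in nhds p. \<forall>i. \<forall>m\<in>\<int>. (y$i \<le> m \<longrightarrow> p$i \<le> m) \<and> (m \<le> y$i \<longrightarrow> m \<le> p$i)"
    by (rule eventually_all_finite)
  then show ?thesis
    by eventually_elim (meson mem_box_cart(2))
qed

section \<open>Dual vertices and dual boxes\<close>

lemma mem_dual_verts: "w \<in> dual_verts \<longleftrightarrow> (\<forall>j. w$j - 1/2 \<in> \<int>)"
  by (simp add: dual_verts_def)

lemma dual_verts_diff_Ints:
  assumes "v \<in> dual_verts" "w \<in> dual_verts"
  shows "v$j - w$j \<in> \<int>"
proof -
  have "v$j - w$j = (v$j - 1/2) - (w$j - 1/2)" by simp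
  then show ?thesis using assms by (metis Ints_diff mem_dual_verts)
qed

lemma dual_verts_coord_not_Ints: "w \<in> dual_verts \<Longrightarrow> w$j \<notin> \<int>"
  using not_Ints_near_half_integer[of "w$j" "w$j"] by (simp add: mem_dual_verts)

lemma dual_verts_dist_ge_1:
  assumes "v \<in> dual_verts" "w \<in> dual_verts" "v \<noteq> w"
  shows "1 \<le> dist v w"
proof -
  obtain j where "v$j \<noteq> w$j" using assms(3) by (metis vec_eq_iff)
  then have "1 \<le> \<bar>v$j - w$j\<bar>"
    using Ints_nonzero_abs_ge1[of "v$j - w$j"] dual_verts_diff_Ints[OF assms(1,2), of j] by simp
  also have "\<dots> \<le> dist v w"
    using dist_vec_nth_le[of v j w] by (simp add: dist_real_def)
  finally show ?thesis .
qed

lemma finite_Int_dual_verts_if_bounded: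
  assumes "bounded S"
  shows "finite (S \<inter> dual_verts)"
proof (rule ccontr)
  assume "infinite (S \<inter> dual_verts)"
  moreover have "compact (closure S)" using assms by simp
  moreover have "S \<inter> dual_verts \<subseteq> closure S" using closure_subset by blast
  ultimately obtain x where "x islimpt S \<inter> dual_verts"
    unfolding compact_eq_Bolzano_Weierstrass by blast
  moreover have "\<not> x islimpt S \<inter> dual_verts"
  proof (rule discrete_imp_not_islimpt[of 1])
    fix u v assume "u \<in> S \<inter> dual_verts" "v \<in> S \<inter> dual_verts" "dist v u < 1"
    then show "v = u" using dual_verts_dist_ge_1[of v u] by fastforce
  qed simp
  ultimately show False by blast
qed

lemma mem_dual_box: "p \<in> dual_box w \<longleftrightarrow> (\<forall>j. \<bar>p$j - w$j\<bar> \<le> 1/2)"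
proof -
  have "w$j - 1/2 \<le> p$j \<and> p$j \<le> w$j + 1/2 \<longleftrightarrow> \<bar>p$j - w$j\<bar> \<le> 1/2" for j
    by arith
  then show ?thesis by (simp add: dual_box_def mem_box_cart)
qed

lemma dual_box_half_integer_coord:
  assumes "w \<in> dual_verts" "p \<in> dual_box w" "p$j - 1/2 \<in> \<int>"
  shows "p$j = w$j"
proof -
  have "p$j - w$j = (p$j - 1/2) - (w$j - 1/2)" by simp
  then have "p$j - w$j \<in> \<int>" using assms(1,3) by (metis Ints_diff mem_dual_verts)
  moreover have "\<bar>p$j - w$j\<bar> \<le> 1/2" using assms(2) mem_dual_box by blast
  ultimately show ?thesis using Ints_nonzero_abs_less1[of "p$j - w$j"] by simp
qed

lemma dual_vert_in_dual_box_eq: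
  assumes "v \<in> dual_verts" "w \<in> dual_verts" "v \<in> dual_box w"
  shows "v = w"
  using dual_box_half_integer_coord[OF assms(2,3)] assms(1) by (simp add: vec_eq_iff mem_dual_verts)

lemma dual_boxes_meet_coord_diff:
  assumes "w \<in> dual_verts" "w' \<in> dual_verts" "q \<in> dual_box w" "q \<in> dual_box w'" "w$j \<noteq> w'$j"
  shows "\<bar>w$j - w'$j\<bar> = 1"
proof -
  have "\<bar>q$j - w$j\<bar> \<le> 1/2" "\<bar>q$j - w'$j\<bar> \<le> 1/2"
    using assms(3,4) mem_dual_box by blast+
  then have "\<bar>w$j - w'$j\<bar> \<le> 1" by arith
  moreover have "1 \<le> \<bar>w$j - w'$j\<bar>"
    using Ints_nonzero_abs_ge1[of "w$j - w'$j"] dual_verts_diff_Ints[OF assms(1,2), of j] assms(5)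
    by simp
  ultimately show ?thesis by simp
qed

lemma ex_dual_box: "\<exists>w\<in>dual_verts. p \<in> dual_box w"
proof
  let ?w = "\<chi> j. of_int \<lfloor>p$j\<rfloor> + 1/2"
  show "?w \<in> dual_verts" by (simp add: mem_dual_verts)
  have "\<bar>p$j - (of_int \<lfloor>p$j\<rfloor> + 1/2)\<bar> \<le> 1/2" for j
    using of_int_floor_le[of "p$j"] real_of_int_floor_add_one_gt[of "p$j"] by arith
  then show "p \<in> dual_box ?w"
    unfolding mem_dual_box by simp
qed

lemma dual_box_integral_corners:
  assumes "w \<in> dual_verts"
  obtains a b where "\<forall>i. a$i \<in> \<int> \<and> b$i \<in> \<int>" "dual_box w = cbox a b"
proof
  show "dual_box w = cbox (w - (\<chi> i. 1/2)) (w + (\<chi> i. 1/2))"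
    by (simp add: dual_box_def)
  have "w$i - 1/2 \<in> \<int>" for i using assms mem_dual_verts by blast
  moreover have "w$i + 1/2 = (w$i - 1/2) + 1" for i by simp
  ultimately show "\<forall>i. (w - (\<chi> i. 1/2))$i \<in> \<int> \<and> (w + (\<chi> i. 1/2))$i \<in> \<int>"
    by (metis Ints_1 Ints_add vector_add_component vector_minus_component vec_lambda_beta)
qed

lemma eventually_nhds_dual_boxes:
  "\<forall>\<^sub>F y in nhds p. \<forall>w\<in>dual_verts. y \<in> dual_box w \<longrightarrow> p \<in> dual_box w"
  using eventually_nhds_integral_cbox[of p]
  by eventually_elim (metis dual_box_integral_corners)

section \<open>Faces and the complement of K\<close>

definition elementary_face :: "int^'n \<Rightarrow> 'n \<Rightarrow> (real^'n) set" where
  "elementary_face l k = {x. x$k = of_int (l$k) \<and>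
      (\<forall>j. j \<noteq> k \<longrightarrow> of_int (l$j) \<le> x$j \<and> x$j \<le> of_int (l$j) + 1)}"

lemma mem_faces: "Q \<in> faces \<longleftrightarrow> (\<exists>l k. Q = elementary_face l k)"
  unfolding faces_def elementary_face_def by simp

lemma face_has_Ints_coord:
  assumes "Q \<in> faces" "p \<in> Q"
  shows "\<exists>k. p$k \<in> \<int>"
proof -
  obtain l k where "Q = elementary_face l k" using assms(1) mem_faces by blast
  then have "p$k = of_int (l$k)" using assms(2) by (simp add: elementary_face_def)
  then show ?thesis by (metis Ints_of_int)
qed

lemma face_contains_point_with_half_integer_coords:
  assumes "Q \<in> faces"
  obtains c k where "c \<in> Q" "\<forall>j. j \<noteq> k \<longrightarrow> c$j - 1/2 \<in> \<int>"
proof -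
  obtain l k where Q: "Q = elementary_face l k" using assms mem_faces by blast
  let ?c = "\<chi> j. if j = k then of_int (l$k) else of_int (l$j) + (1/2 :: real)"
  have "?c \<in> Q" by (simp add: Q elementary_face_def)
  moreover have "\<forall>j. j \<noteq> k \<longrightarrow> ?c$j - 1/2 \<in> \<int>" by simp
  ultimately show ?thesis using that by blast
qed

lemma face_through_point_unique:
  assumes "Q \<in> faces" "Q' \<in> faces" "p \<in> Q" "p \<in> Q'"
    and single: "\<And>i j. p$i \<in> \<int> \<Longrightarrow> p$j \<in> \<int> \<Longrightarrow> i = j"
  shows "Q = Q'"
proof -
  obtain l k where Q: "Q = elementary_face l k" using assms(1) mem_faces by blast
  obtain l' k' where Q': "Q' = elementary_face l' k'" using assms(2) mem_faces by blast
  have pk: "p$k = of_int (l$k)" "p$k' = of_int (l'$k')"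
    using assms(3,4) by (simp_all add: Q Q' elementary_face_def)
  then have "k = k'" using single[of k k'] Ints_of_int by metis
  have "l$j = l'$j" for j
  proof (cases "j = k")
    case True
    then show ?thesis using pk \<open>k = k'\<close> by simp
  next
    case False
    then have "p$j \<notin> \<int>" using single[of j k] pk Ints_of_int by metis
    moreover have "of_int (l$j) \<le> p$j" "p$j \<le> of_int (l$j) + 1"
      "of_int (l'$j) \<le> p$j" "p$j \<le> of_int (l'$j) + 1"
      using assms(3,4) False \<open>k = k'\<close> by (simp_all add: Q Q' elementary_face_def)
    ultimately have "l$j = \<lfloor>p$j\<rfloor>" "l'$j = \<lfloor>p$j\<rfloor>"
      using floor_eq_if_not_Ints by blast+
    then show ?thesis by simp
  qed
  then have "l = l'" by (simp add: vec_eq_iff)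
  then show ?thesis using Q Q' \<open>k = k'\<close> by simp
qed

lemma mem_Kset_iff: "p \<in> Kset \<omega> \<longleftrightarrow> (\<exists>Q\<in>faces. \<omega> Q \<and> p \<in> Q)"
  unfolding Kset_def by blast

definition dual_cell :: "real^'n \<Rightarrow> (real^'n) set" where
  "dual_cell w = box (w - (\<chi> i. 1/2)) (w + (\<chi> i. 1/2))"

lemma mem_dual_cell: "p \<in> dual_cell w \<longleftrightarrow> (\<forall>j. \<bar>p$j - w$j\<bar> < 1/2)"
proof -
  have "w$j - 1/2 < p$j \<and> p$j < w$j + 1/2 \<longleftrightarrow> \<bar>p$j - w$j\<bar> < 1/2" for j
    by arith
  then show ?thesis by (simp add: dual_cell_def mem_box_cart)
qed

lemma dual_cell_disjoint_Kset:
  assumes "w \<in> dual_verts"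
  shows "dual_cell w \<inter> Kset \<omega> = {}"
proof -
  have "p \<notin> Kset \<omega>" if "p \<in> dual_cell w" for p
  proof
    assume "p \<in> Kset \<omega>"
    then obtain Q where "Q \<in> faces" "p \<in> Q" by (auto simp: mem_Kset_iff)
    then obtain k where "p$k \<in> \<int>" using face_has_Ints_coord by blast
    moreover have "\<bar>p$k - w$k\<bar> < 1/2" using that mem_dual_cell by blast
    moreover have "w$k - 1/2 \<in> \<int>" using assms mem_dual_verts by blast
    ultimately show False using not_Ints_near_half_integer by blast
  qed
  then show ?thesis by blast
qed

lemma dual_vert_not_in_Kset:
  assumes "w \<in> dual_verts"
  shows "w \<notin> Kset \<omega>"
proof -
  have "w \<in> dual_cell w" by (simp add: mem_dual_cell)
  then show ?thesis using dual_cell_disjoint_Kset[OF assms] by blast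
qed

lemma connected_dual_cell: "connected (dual_cell w)"
  unfolding dual_cell_def by (rule convex_connected) (rule convex_box)

lemma closure_dual_cell: "closure (dual_cell w) = dual_box w"
proof -
  have "w \<in> dual_cell w" by (simp add: mem_dual_cell)
  then have "box (w - (\<chi> i. 1/2)) (w + (\<chi> i. 1/2)) \<noteq> {}" unfolding dual_cell_def by blast
  then show ?thesis unfolding dual_cell_def dual_box_def by (rule closure_box)
qed

lemma dual_box_point_in_component:
  assumes "w \<in> dual_verts" "y \<in> dual_box w" "y \<notin> Kset \<omega>"
  shows "y \<in> connected_component_set (- Kset \<omega>) w"
proof -
  let ?T = "insert y (dual_cell w)"
  have "dual_cell w \<subseteq> ?T" by blast
  moreover have "?T \<subseteq> closure (dual_cell w)"
    using assms(2) closure_subset[of "dual_cell w"] unfolding closure_dual_cell by blast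
  ultimately have "connected ?T"
    by (rule connected_intermediate_closure[OF connected_dual_cell])
  moreover have "w \<in> ?T" by (simp add: mem_dual_cell)
  moreover have "?T \<subseteq> - Kset \<omega>"
    using assms(3) dual_cell_disjoint_Kset[OF assms(1), of \<omega>] by blast
  ultimately have "?T \<subseteq> connected_component_set (- Kset \<omega>) w"
    by (intro connected_component_maximal[of w])
  then show ?thesis by blast
qed

lemma dual_box_Kset_in_frontier:
  assumes "w \<in> dual_verts" "y \<in> dual_box w" "y \<in> Kset \<omega>"
  shows "y \<in> frontier (connected_component_set (- Kset \<omega>) w)"
proof -
  let ?D = "connected_component_set (- Kset \<omega>) w"
  have "dual_cell w \<subseteq> ?D"
  proof
    fix p assume p: "p \<in> dual_cell w"
    then have "p \<in> dual_box w"
      using closure_subset[of "dual_cell w"] unfolding closure_dual_cell by blast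
    moreover have "p \<notin> Kset \<omega>" using p dual_cell_disjoint_Kset[OF assms(1), of \<omega>] by blast
    ultimately show "p \<in> ?D" by (rule dual_box_point_in_component[OF assms(1)])
  qed
  then have "dual_box w \<subseteq> closure ?D"
    using closure_mono[of "dual_cell w" ?D] unfolding closure_dual_cell by blast
  then have "y \<in> closure ?D" using assms(2) by blast
  moreover have "y \<notin> interior ?D"
    using assms(3) interior_subset[of ?D] connected_component_subset[of "- Kset \<omega>" w] by blast
  ultimately show ?thesis unfolding frontier_def by blast
qed

section \<open>Dual bonds\<close>

lemma dual_bond_iff:
  "dual_bond x y \<longleftrightarrow> x \<in> dual_verts \<and> y \<in> dual_verts \<and>
     (\<exists>k. \<bar>x$k - y$k\<bar> = 1 \<and> (\<forall>j. j \<noteq> k \<longrightarrow> x$j = y$j))"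
proof (intro iffI conjI)
  assume "dual_bond x y"
  then have x: "x \<in> dual_verts" and y: "y \<in> dual_verts"
    and sum: "(\<Sum>i\<in>UNIV. \<bar>x$i - y$i\<bar>) = 1"
    by (simp_all add: dual_bond_def)
  then show "x \<in> dual_verts" "y \<in> dual_verts" by simp_all
  have "x \<noteq> y" using sum by auto
  then obtain k where "x$k \<noteq> y$k" by (metis vec_eq_iff)
  then have "1 \<le> \<bar>x$k - y$k\<bar>"
    using Ints_nonzero_abs_ge1[of "x$k - y$k"] dual_verts_diff_Ints[OF x y, of k] by simp
  moreover have "(\<Sum>i\<in>UNIV. \<bar>x$i - y$i\<bar>) = \<bar>x$k - y$k\<bar> + (\<Sum>i\<in>UNIV - {k}. \<bar>x$i - y$i\<bar>)"
    by (simp add: sum.remove)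
  moreover have "0 \<le> (\<Sum>i\<in>UNIV - {k}. \<bar>x$i - y$i\<bar>)" by (simp add: sum_nonneg)
  ultimately have "\<bar>x$k - y$k\<bar> = 1" "(\<Sum>i\<in>UNIV - {k}. \<bar>x$i - y$i\<bar>) = 0"
    using sum by linarith+
  then show "\<exists>k. \<bar>x$k - y$k\<bar> = 1 \<and> (\<forall>j. j \<noteq> k \<longrightarrow> x$j = y$j)"
    by (intro exI[of _ k]) (simp add: sum_nonneg_eq_0_iff)
next
  assume "x \<in> dual_verts \<and> y \<in> dual_verts \<and>
    (\<exists>k. \<bar>x$k - y$k\<bar> = 1 \<and> (\<forall>j. j \<noteq> k \<longrightarrow> x$j = y$j))"
  then obtain k where xy: "x \<in> dual_verts" "y \<in> dual_verts"
    and k: "\<bar>x$k - y$k\<bar> = 1" "\<forall>j. j \<noteq> k \<longrightarrow> x$j = y$j"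
    by blast
  have "(\<Sum>i\<in>UNIV. \<bar>x$i - y$i\<bar>) = (\<Sum>i\<in>UNIV. if i = k then 1 else 0)"
    by (rule sum.cong) (use k in auto)
  then show "dual_bond x y" using xy by (simp add: dual_bond_def)
qed

lemma dual_bond_sym: "dual_bond x y \<Longrightarrow> dual_bond y x"
  unfolding dual_bond_def by (simp add: abs_minus_commute)

lemma dual_bond_if_dual_boxes_share_point:
  assumes w: "w \<in> dual_verts" "c \<in> dual_box w" and w': "w' \<in> dual_verts" "c \<in> dual_box w'"
    and "w \<noteq> w'" and half: "\<forall>j. j \<noteq> k \<longrightarrow> c$j - 1/2 \<in> \<int>"
  shows "dual_bond w w'"
proof -
  have off_k: "\<forall>j. j \<noteq> k \<longrightarrow> w$j = w'$j"
    using dual_box_half_integer_coord w w' half by metis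
  then have "w$k \<noteq> w'$k" using \<open>w \<noteq> w'\<close> by (metis vec_eq_iff)
  then have "\<bar>w$k - w'$k\<bar> = 1" by (rule dual_boxes_meet_coord_diff[OF w(1) w'(1) w(2) w'(2)])
  then show ?thesis using w(1) w'(1) off_k dual_bond_iff by blast
qed

lemma midpoint_component: "midpoint x y $ j = (x$j + y$j) / (2::real)"
  by (simp add: midpoint_def)

lemma bond_face_eq_elementary_face:
  assumes x: "x \<in> dual_verts" and k: "\<bar>x$k - y$k\<bar> = 1" "\<forall>j. j \<noteq> k \<longrightarrow> x$j = y$j"
  shows "bond_face x y = elementary_face (\<chi> j. \<lfloor>midpoint x y $ j\<rfloor>) k"
proof (rule set_eqI)
  fix p
  let ?l = "\<chi> j. \<lfloor>midpoint x y $ j\<rfloor>"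
  have "y$k = x$k - 1 \<or> y$k = x$k + 1" using k(1) by arith
  then have "(x$k + y$k) / 2 = x$k - 1/2 \<or> (x$k + y$k) / 2 = (x$k - 1/2) + 1" by auto
  then have "(x$k + y$k) / 2 \<in> \<int>" using x mem_dual_verts by (metis Ints_1 Ints_add)
  then have lk: "of_int (?l$k) = (x$k + y$k) / 2"
    by (simp add: midpoint_component)
  have lj: "of_int (?l$j) = x$j - 1/2" if "j \<noteq> k" for j
  proof -
    have "y$j = x$j" using that k(2) by simp
    moreover have "x$j - 1/2 \<in> \<int>" using x mem_dual_verts by blast
    ultimately show ?thesis using floor_half_integer by (simp add: midpoint_component)
  qed
  have coord: "(\<bar>t - x$j\<bar> \<le> 1/2 \<and> \<bar>t - y$j\<bar> \<le> 1/2) \<longleftrightarrow>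
      (if j = k then t = of_int (?l$j) else of_int (?l$j) \<le> t \<and> t \<le> of_int (?l$j) + 1)" for t j
  proof (cases "j = k")
    case True
    then show ?thesis using lk abs_le_half_both_iff[OF k(1), of t] by auto
  next
    case False
    then have "y$j = x$j" using k(2) by simp
    then show ?thesis using False lj[OF False] unfolding abs_le_iff by auto
  qed
  have "p \<in> bond_face x y \<longleftrightarrow> (\<forall>j. \<bar>p$j - x$j\<bar> \<le> 1/2 \<and> \<bar>p$j - y$j\<bar> \<le> 1/2)"
    unfolding bond_face_def Int_iff mem_dual_box by blast
  also have "\<dots> \<longleftrightarrow> (\<forall>j. if j = k then p$j = of_int (?l$j)
      else of_int (?l$j) \<le> p$j \<and> p$j \<le> of_int (?l$j) + 1)"
    unfolding coord ..
  also have "\<dots> \<longleftrightarrow> p \<in> elementary_face ?l k"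
    unfolding elementary_face_def mem_Collect_eq by (intro iffI; metis)
  finally show "p \<in> bond_face x y \<longleftrightarrow> p \<in> elementary_face ?l k" .
qed

lemma bond_face_in_faces:
  assumes "dual_bond x y"
  shows "bond_face x y \<in> faces"
proof -
  obtain k where "x \<in> dual_verts" "\<bar>x$k - y$k\<bar> = 1" "\<forall>j. j \<noteq> k \<longrightarrow> x$j = y$j"
    using assms dual_bond_iff by blast
  then have "bond_face x y = elementary_face (\<chi> j. \<lfloor>midpoint x y $ j\<rfloor>) k"
    by (rule bond_face_eq_elementary_face)
  then show ?thesis unfolding mem_faces by blast
qed

lemma midpoint_in_bond_face:
  assumes "dual_bond x y"
  shows "midpoint x y \<in> bond_face x y"
proof -
  obtain k where "\<bar>x$k - y$k\<bar> = 1" "\<forall>j. j \<noteq> k \<longrightarrow> x$j = y$j"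
    using assms dual_bond_iff by blast
  then have d: "\<bar>x$j - y$j\<bar> \<le> 1" for j by (cases "j = k") auto
  have "\<bar>(x$j + y$j) / 2 - x$j\<bar> \<le> 1/2 \<and> \<bar>(x$j + y$j) / 2 - y$j\<bar> \<le> 1/2" for j
  proof -
    have "(x$j + y$j) / 2 - x$j = (y$j - x$j) / 2" "(x$j + y$j) / 2 - y$j = (x$j - y$j) / 2"
      by simp_all
    then show ?thesis using d[of j] by (simp add: abs_minus_commute)
  qed
  then show ?thesis
    unfolding bond_face_def Int_iff mem_dual_box midpoint_component by blast
qed

lemma midpoint_dual_bond_single_Ints_coord:
  assumes "dual_bond x y" "midpoint x y $ i \<in> \<int>" "midpoint x y $ j \<in> \<int>"
  shows "i = j"
proof -
  obtain k where x: "x \<in> dual_verts" and k: "\<forall>j. j \<noteq> k \<longrightarrow> x$j = y$j"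
    using assms(1) dual_bond_iff by blast
  have "midpoint x y $ l \<notin> \<int>" if "l \<noteq> k" for l
    using that k dual_verts_coord_not_Ints[OF x, of l] by (simp add: midpoint_component)
  then have "i = k" "j = k" using assms(2,3) by blast+
  then show ?thesis by simp
qed

lemma open_dual_bond_connected:
  assumes "open_dual_bond \<omega> x y"
  shows "y \<in> connected_component_set (- Kset \<omega>) x"
proof -
  have bond: "dual_bond x y" and closed: "\<not> \<omega> (bond_face x y)"
    using assms by (simp_all add: open_dual_bond_def)
  have x: "x \<in> dual_verts" and y: "y \<in> dual_verts" using bond dual_bond_iff by blast+
  let ?m = "midpoint x y"
  have m: "?m \<in> dual_box x" "?m \<in> dual_box y"
    using midpoint_in_bond_face[OF bond] by (simp_all add: bond_face_def)
  have "?m \<notin> Kset \<omega>"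
  proof
    assume "?m \<in> Kset \<omega>"
    then obtain Q where Q: "Q \<in> faces" "\<omega> Q" "?m \<in> Q" by (auto simp: mem_Kset_iff)
    have "Q = bond_face x y"
      by (rule face_through_point_unique[OF Q(1) bond_face_in_faces[OF bond] Q(3)
            midpoint_in_bond_face[OF bond] midpoint_dual_bond_single_Ints_coord[OF bond]])
    then show False using Q(2) closed by simp
  qed
  then have "connected_component (- Kset \<omega>) x ?m" "connected_component (- Kset \<omega>) y ?m"
    using dual_box_point_in_component x y m by blast+
  then have "connected_component (- Kset \<omega>) x y"
    by (meson connected_component_sym connected_component_trans)
  then show ?thesis by simp
qed

section \<open>Open dual clusters and components\<close>

lemma dual_cluster_trans:
  "y \<in> dual_cluster \<omega> z \<Longrightarrow> (open_dual_bond \<omega>)\<^sup>*\<^sup>* y y' \<Longrightarrow> y' \<in> dual_cluster \<omega> z"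
  unfolding dual_cluster_def by simp

lemma dual_cluster_subset_dual_verts:
  assumes "z \<in> dual_verts"
  shows "dual_cluster \<omega> z \<subseteq> dual_verts"
proof
  fix y assume "y \<in> dual_cluster \<omega> z"
  then have "(open_dual_bond \<omega>)\<^sup>*\<^sup>* z y" by (simp add: dual_cluster_def)
  then show "y \<in> dual_verts"
    by (induction rule: rtranclp_induct) (use assms in \<open>auto simp: open_dual_bond_def dual_bond_def\<close>)
qed

lemma dual_cluster_subset_component:
  assumes "z \<in> dual_verts"
  shows "dual_cluster \<omega> z \<subseteq> connected_component_set (- Kset \<omega>) z"
proof
  fix y assume "y \<in> dual_cluster \<omega> z"
  then have "(open_dual_bond \<omega>)\<^sup>*\<^sup>* z y" by (simp add: dual_cluster_def)
  then show "y \<in> connected_component_set (- Kset \<omega>) z"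
  proof (induction rule: rtranclp_induct)
    case base
    then show ?case using dual_vert_not_in_Kset[OF assms] by simp
  next
    case (step y y')
    have "connected_component_set (- Kset \<omega>) y = connected_component_set (- Kset \<omega>) z"
      using step.IH by (rule connected_component_eq)
    then show ?case using open_dual_bond_connected[OF step.hyps(2)] by simp
  qed
qed

lemma open_dual_bond_if_common_point_off_Kset:
  assumes "dual_bond v w" "q \<in> dual_box v" "q \<in> dual_box w" "q \<notin> Kset \<omega>"
  shows "open_dual_bond \<omega> v w"
proof -
  have "q \<in> bond_face v w" using assms(2,3) by (simp add: bond_face_def)
  then have "\<not> \<omega> (bond_face v w)"
    using assms(4) bond_face_in_faces[OF assms(1)] mem_Kset_iff by blast
  then show ?thesis using assms(1) by (simp add: open_dual_bond_def)
qed

lemma dual_boxes_through_point_connected: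
  assumes q: "q \<notin> Kset \<omega>" and w: "w \<in> dual_verts" "q \<in> dual_box w"
    and w': "w' \<in> dual_verts" "q \<in> dual_box w'"
  shows "(open_dual_bond \<omega>)\<^sup>*\<^sup>* w w'"
proof -
  have "(open_dual_bond \<omega>)\<^sup>*\<^sup>* w w'"
    if "card {i. w$i \<noteq> w'$i} = n" "w' \<in> dual_verts" "q \<in> dual_box w'" for n w'
    using that
  proof (induction n arbitrary: w')
    case 0
    then have "w = w'" by (simp add: vec_eq_iff)
    then show ?case by simp
  next
    case (Suc n)
    then obtain i where i: "w$i \<noteq> w'$i" by fastforce
    define v where "v = (\<chi> j. if j = i then w$j else w'$j)"
    have "{j. w$j \<noteq> v$j} = {j. w$j \<noteq> w'$j} - {i}" by (auto simp: v_def)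
    then have "card {j. w$j \<noteq> v$j} = n" using Suc.prems(1) i by simp
    moreover have v: "v \<in> dual_verts" using w(1) Suc.prems(2) by (simp add: v_def mem_dual_verts)
    moreover have qv: "q \<in> dual_box v" using w(2) Suc.prems(3) by (simp add: v_def mem_dual_box)
    ultimately have "(open_dual_bond \<omega>)\<^sup>*\<^sup>* w v" by (rule Suc.IH)
    moreover have "dual_bond v w'"
    proof -
      have "\<bar>v$i - w'$i\<bar> = 1"
        using dual_boxes_meet_coord_diff[OF w(1) Suc.prems(2) w(2) Suc.prems(3) i]
        by (simp add: v_def)
      moreover have "\<forall>j. j \<noteq> i \<longrightarrow> v$j = w'$j" by (simp add: v_def)
      ultimately show ?thesis using v Suc.prems(2) dual_bond_iff by blast
    qed
    then have "open_dual_bond \<omega> v w'"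
      using open_dual_bond_if_common_point_off_Kset qv Suc.prems(3) q by blast
    ultimately show ?case by (rule rtranclp.rtrancl_into_rtrancl)
  qed
  then show ?thesis using w' by blast
qed

lemma eventually_nhds_dual_cluster_boxes:
  assumes z: "z \<in> dual_verts" and p: "p \<notin> Kset \<omega>"
  shows "\<forall>\<^sub>F y in nhds p.
    y \<in> (\<Union>w\<in>dual_cluster \<omega> z. dual_box w) \<longleftrightarrow> p \<in> (\<Union>w\<in>dual_cluster \<omega> z. dual_box w)"
  using eventually_nhds_dual_boxes[of p]
proof eventually_elim
  case (elim y)
  obtain w where w: "w \<in> dual_verts" "y \<in> dual_box w" using ex_dual_box by blast
  have "y \<in> (\<Union>w\<in>dual_cluster \<omega> z. dual_box w)" if "p \<in> dual_box w0" "w0 \<in> dual_cluster \<omega> z" for w0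
  proof -
    have "(open_dual_bond \<omega>)\<^sup>*\<^sup>* w0 w"
      using dual_boxes_through_point_connected[OF p _ that(1) w(1)] elim w
        dual_cluster_subset_dual_verts[OF z] that(2) by blast
    then show ?thesis using dual_cluster_trans[OF that(2)] w(2) by blast
  qed
  moreover have "p \<in> (\<Union>w\<in>dual_cluster \<omega> z. dual_box w)"
    if "y \<in> (\<Union>w\<in>dual_cluster \<omega> z. dual_box w)"
    using that elim dual_cluster_subset_dual_verts[OF z] by blast
  ultimately show ?case by blast
qed

lemma component_subset_dual_cluster_boxes:
  assumes z: "z \<in> dual_verts"
  shows "connected_component_set (- Kset \<omega>) z \<subseteq> (\<Union>w\<in>dual_cluster \<omega> z. dual_box w)"
proof
  let ?D = "connected_component_set (- Kset \<omega>) z"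
  let ?U = "\<Union>w\<in>dual_cluster \<omega> z. dual_box w"
  have local_const: "\<forall>p\<in>?D. \<forall>\<^sub>F y in at p within ?D. (p \<in> ?U) = (y \<in> ?U)"
  proof
    fix p assume "p \<in> ?D"
    then have "p \<notin> Kset \<omega>" using connected_component_subset by blast
    from eventually_nhds_dual_cluster_boxes[OF z this]
    show "\<forall>\<^sub>F y in at p within ?D. (p \<in> ?U) = (y \<in> ?U)"
      unfolding eventually_at_filter by eventually_elim blast
  qed
  have "z \<in> ?D" using dual_vert_not_in_Kset[OF z] by simp
  moreover fix q assume "q \<in> ?D"
  ultimately have "(z \<in> ?U) = (q \<in> ?U)"
    by (rule connected_local_const[OF connected_connected_component _ _ local_const])
  moreover have "z \<in> ?U" using mem_dual_box[of z z] dual_cluster_def by force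
  ultimately show "q \<in> ?U" by blast
qed

lemma component_Int_dual_verts:
  assumes z: "z \<in> dual_verts"
  shows "connected_component_set (- Kset \<omega>) z \<inter> dual_verts = dual_cluster \<omega> z"
proof
  show "connected_component_set (- Kset \<omega>) z \<inter> dual_verts \<subseteq> dual_cluster \<omega> z"
  proof
    fix v assume v: "v \<in> connected_component_set (- Kset \<omega>) z \<inter> dual_verts"
    then obtain w where "w \<in> dual_cluster \<omega> z" "v \<in> dual_box w"
      using component_subset_dual_cluster_boxes[OF z] by blast
    then show "v \<in> dual_cluster \<omega> z"
      using dual_vert_in_dual_box_eq v dual_cluster_subset_dual_verts[OF z] by blast
  qed
  show "dual_cluster \<omega> z \<subseteq> connected_component_set (- Kset \<omega>) z \<inter> dual_verts"
    using dual_cluster_subset_component[OF z] dual_cluster_subset_dual_verts[OF z] by blast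
qed

lemma bounded_component_iff_finite_dual_cluster:
  assumes z: "z \<in> dual_verts"
  shows "bounded (connected_component_set (- Kset \<omega>) z) \<longleftrightarrow> finite (dual_cluster \<omega> z)"
proof
  assume "bounded (connected_component_set (- Kset \<omega>) z)"
  then show "finite (dual_cluster \<omega> z)"
    using finite_Int_dual_verts_if_bounded component_Int_dual_verts[OF z] by metis
next
  assume "finite (dual_cluster \<omega> z)"
  then have "bounded (\<Union>w\<in>dual_cluster \<omega> z. dual_box w)"
    by (auto simp: dual_box_def)
  then show "bounded (connected_component_set (- Kset \<omega>) z)"
    using component_subset_dual_cluster_boxes[OF z] bounded_subset by blast
qed

lemma components_complement_Kset:
  "D \<in> components (- Kset \<omega>) \<longleftrightarrow> (\<exists>z\<in>dual_verts. D = connected_component_set (- Kset \<omega>) z)"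
proof
  assume "D \<in> components (- Kset \<omega>)"
  then obtain x where x: "x \<notin> Kset \<omega>" and D: "D = connected_component_set (- Kset \<omega>) x"
    unfolding components_iff by blast
  obtain w where w: "w \<in> dual_verts" "x \<in> dual_box w" using ex_dual_box by blast
  then have "connected_component_set (- Kset \<omega>) x = connected_component_set (- Kset \<omega>) w"
    using dual_box_point_in_component[OF w x] connected_component_eq by blast
  then show "\<exists>z\<in>dual_verts. D = connected_component_set (- Kset \<omega>) z" using D w(1) by blast
next
  assume "\<exists>z\<in>dual_verts. D = connected_component_set (- Kset \<omega>) z"
  then show "D \<in> components (- Kset \<omega>)"
    unfolding components_iff using dual_vert_not_in_Kset by blast
qed

section \<open>Holes and their adjacency\<close>

lemma hole_iff_component:
  "hole \<omega> D \<longleftrightarrow>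
     (\<exists>z\<in>dual_verts. finite (dual_cluster \<omega> z) \<and> D = connected_component_set (- Kset \<omega>) z)"
  unfolding hole_def components_complement_Kset
  using bounded_component_iff_finite_dual_cluster by blast

lemma hole_eq_component_if_Int_dual_verts:
  assumes "hole \<omega> D" "z \<in> dual_verts" "D \<inter> dual_verts = dual_cluster \<omega> z"
  shows "D = connected_component_set (- Kset \<omega>) z"
proof -
  obtain z' where D: "D = connected_component_set (- Kset \<omega>) z'"
    using assms(1) hole_iff_component by blast
  have "z \<in> D" using assms(3) dual_cluster_def by fastforce
  then show ?thesis unfolding D by (rule connected_component_eq[symmetric])
qed

lemma hole_of_dual_cluster:
  assumes "z \<in> dual_verts" "finite (dual_cluster \<omega> z)"
  shows "hole_of \<omega> (dual_cluster \<omega> z) = connected_component_set (- Kset \<omega>) z"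
  unfolding hole_of_def
proof (rule the_equality)
  show "hole \<omega> (connected_component_set (- Kset \<omega>) z) \<and>
      connected_component_set (- Kset \<omega>) z \<inter> dual_verts = dual_cluster \<omega> z"
    using assms hole_iff_component component_Int_dual_verts by blast
qed (use assms(1) hole_eq_component_if_Int_dual_verts in blast)

lemma hole_of_finite_dual_cluster:
  assumes "C \<in> finite_dual_clusters \<omega>"
  shows "hole \<omega> (hole_of \<omega> C) \<and> hole_of \<omega> C \<inter> dual_verts = C"
proof -
  obtain z where z: "z \<in> dual_verts" "finite (dual_cluster \<omega> z)" and C: "C = dual_cluster \<omega> z"
    using assms unfolding finite_dual_clusters_def by blast
  then have "hole_of \<omega> C = connected_component_set (- Kset \<omega>) z"
    using hole_of_dual_cluster by blast
  then show ?thesis using z C hole_iff_component component_Int_dual_verts by blast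
qed

lemma Int_dual_verts_of_hole:
  assumes "hole \<omega> D"
  shows "D \<inter> dual_verts \<in> finite_dual_clusters \<omega> \<and> hole_of \<omega> (D \<inter> dual_verts) = D"
proof -
  obtain z where z: "z \<in> dual_verts" "finite (dual_cluster \<omega> z)"
    and D: "D = connected_component_set (- Kset \<omega>) z"
    using assms hole_iff_component by blast
  then have "D \<inter> dual_verts = dual_cluster \<omega> z" using component_Int_dual_verts by blast
  then show ?thesis using z D hole_of_dual_cluster unfolding finite_dual_clusters_def by auto
qed

lemma frontier_component_in_dual_box:
  assumes "m \<in> frontier (connected_component_set (- Kset \<omega>) z)"
  shows "\<exists>w\<in>dual_verts. w \<in> connected_component_set (- Kset \<omega>) z \<and> m \<in> dual_box w"
proof -
  let ?D = "connected_component_set (- Kset \<omega>) z"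
  obtain S where S: "open S" "m \<in> S"
    and near: "\<And>y w. y \<in> S \<Longrightarrow> w \<in> dual_verts \<Longrightarrow> y \<in> dual_box w \<Longrightarrow> m \<in> dual_box w"
    using eventually_nhds_dual_boxes[of m] unfolding eventually_nhds by blast
  have "m \<in> closure ?D" using assms by (simp add: frontier_def)
  then obtain y where y: "y \<in> ?D" "y \<in> S"
    using S unfolding closure_iff_nhds_not_empty by blast
  obtain w where w: "w \<in> dual_verts" "y \<in> dual_box w" using ex_dual_box by blast
  have "y \<notin> Kset \<omega>" using y(1) connected_component_subset by blast
  then have "connected_component_set (- Kset \<omega>) y = connected_component_set (- Kset \<omega>) w"
    using dual_box_point_in_component[OF w] connected_component_eq by blast
  then have "w \<in> ?D" using y(1) connected_component_eq dual_vert_not_in_Kset[OF w(1)] by fastforce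
  then show ?thesis using w near[OF y(2) w] by blast
qed

lemma common_boundary_bond_if_adjacent_components:
  assumes z: "z \<in> dual_verts" and z': "z' \<in> dual_verts"
    and disjoint: "connected_component_set (- Kset \<omega>) z \<inter> connected_component_set (- Kset \<omega>) z' = {}"
    and adjacent: "adjacent_holes \<omega> (connected_component_set (- Kset \<omega>) z) (connected_component_set (- Kset \<omega>) z')"
  shows "edge_boundary (dual_cluster \<omega> z) \<inter> edge_boundary (dual_cluster \<omega> z') \<noteq> {}"
proof -
  obtain Q where Q: "Q \<in> faces" "Q \<subseteq> frontier (connected_component_set (- Kset \<omega>) z)"
    "Q \<subseteq> frontier (connected_component_set (- Kset \<omega>) z')"
    using adjacent unfolding adjacent_holes_def by blast
  obtain c k where c: "c \<in> Q" "\<forall>j. j \<noteq> k \<longrightarrow> c$j - 1/2 \<in> \<int>"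
    using face_contains_point_with_half_integer_coords[OF Q(1)] by blast
  obtain w where w: "w \<in> dual_verts" "w \<in> connected_component_set (- Kset \<omega>) z" "c \<in> dual_box w"
    using frontier_component_in_dual_box[of c] Q(2) c(1) by blast
  obtain w' where w': "w' \<in> dual_verts" "w' \<in> connected_component_set (- Kset \<omega>) z'" "c \<in> dual_box w'"
    using frontier_component_in_dual_box[of c] Q(3) c(1) by blast
  have "w \<noteq> w'" using w(2) w'(2) disjoint by blast
  then have bond: "dual_bond w w'"
    using dual_bond_if_dual_boxes_share_point[OF w(1,3) w'(1,3) _ c(2)] by blast
  have C: "dual_cluster \<omega> z = connected_component_set (- Kset \<omega>) z \<inter> dual_verts"
    "dual_cluster \<omega> z' = connected_component_set (- Kset \<omega>) z' \<inter> dual_verts"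
    using component_Int_dual_verts[OF z] component_Int_dual_verts[OF z'] by simp_all
  have "w \<in> dual_cluster \<omega> z" "w \<notin> dual_cluster \<omega> z'"
    "w' \<in> dual_cluster \<omega> z'" "w' \<notin> dual_cluster \<omega> z"
    unfolding C using w w' disjoint by blast+
  then have "{w, w'} \<in> edge_boundary (dual_cluster \<omega> z)" "{w', w} \<in> edge_boundary (dual_cluster \<omega> z')"
    unfolding edge_boundary_def using bond dual_bond_sym[OF bond] by blast+
  moreover have "{w', w} = {w, w'}" by blast
  ultimately show ?thesis by auto
qed

lemma adjacent_components_if_common_boundary_bond:
  assumes z: "z \<in> dual_verts" and z': "z' \<in> dual_verts"
    and disjoint: "connected_component_set (- Kset \<omega>) z \<inter> connected_component_set (- Kset \<omega>) z' = {}"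
    and common: "edge_boundary (dual_cluster \<omega> z) \<inter> edge_boundary (dual_cluster \<omega> z') \<noteq> {}"
  shows "adjacent_holes \<omega> (connected_component_set (- Kset \<omega>) z) (connected_component_set (- Kset \<omega>) z')"
proof -
  let ?C = "dual_cluster \<omega> z" and ?C' = "dual_cluster \<omega> z'"
  obtain x y x' y' where e: "{x, y} = {x', y'}" "dual_bond x y" "x \<in> ?C" "y \<notin> ?C"
    "x' \<in> ?C'" "y' \<notin> ?C'"
    using common unfolding edge_boundary_def by blast
  have xz: "x \<in> connected_component_set (- Kset \<omega>) z"
    using e(3) dual_cluster_subset_component[OF z] by blast
  have x'z': "x' \<in> connected_component_set (- Kset \<omega>) z'"
    using e(5) dual_cluster_subset_component[OF z'] by blast
  have "x \<noteq> x'" using xz x'z' disjoint by blast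
  then have "y = x'" using e(1) by (metis doubleton_eq_iff)
  have "\<omega> (bond_face x y)"
  proof (rule ccontr)
    assume "\<not> \<omega> (bond_face x y)"
    then have "open_dual_bond \<omega> x y" using e(2) by (simp add: open_dual_bond_def)
    then have "y \<in> ?C" using dual_cluster_trans[OF e(3) r_into_rtranclp] by blast
    then show False using e(4) by blast
  qed
  then have QK: "bond_face x y \<subseteq> Kset \<omega>"
    using bond_face_in_faces[OF e(2)] unfolding Kset_def by blast
  have x: "x \<in> dual_verts" and y: "y \<in> dual_verts" using e(2) dual_bond_iff by blast+
  have "connected_component_set (- Kset \<omega>) x = connected_component_set (- Kset \<omega>) z"
    using xz by (rule connected_component_eq)
  moreover have "connected_component_set (- Kset \<omega>) y = connected_component_set (- Kset \<omega>) z'"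
    using x'z' \<open>y = x'\<close> connected_component_eq by blast
  moreover have "bond_face x y \<subseteq> frontier (connected_component_set (- Kset \<omega>) x)"
    "bond_face x y \<subseteq> frontier (connected_component_set (- Kset \<omega>) y)"
    using dual_box_Kset_in_frontier[OF x] dual_box_Kset_in_frontier[OF y] QK
    unfolding bond_face_def by blast+
  ultimately show ?thesis
    unfolding adjacent_holes_def using bond_face_in_faces[OF e(2)] by auto
qed

lemma adjacent_components_iff_common_boundary_bond:
  assumes z: "z \<in> dual_verts" and z': "z' \<in> dual_verts"
    and "dual_cluster \<omega> z \<noteq> dual_cluster \<omega> z'"
  shows "adjacent_holes \<omega> (connected_component_set (- Kset \<omega>) z) (connected_component_set (- Kset \<omega>) z')
    \<longleftrightarrow> edge_boundary (dual_cluster \<omega> z) \<inter> edge_boundary (dual_cluster \<omega> z') \<noteq> {}"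
proof -
  have "connected_component_set (- Kset \<omega>) z \<noteq> connected_component_set (- Kset \<omega>) z'"
  proof
    assume "connected_component_set (- Kset \<omega>) z = connected_component_set (- Kset \<omega>) z'"
    then have "dual_cluster \<omega> z = dual_cluster \<omega> z'"
      using component_Int_dual_verts[OF z, of \<omega>] component_Int_dual_verts[OF z', of \<omega>] by metis
    then show False using assms(3) by contradiction
  qed
  then have disjoint:
    "connected_component_set (- Kset \<omega>) z \<inter> connected_component_set (- Kset \<omega>) z' = {}"
    using connected_component_nonoverlap by blast
  show ?thesis
    using common_boundary_bond_if_adjacent_components[OF z z' disjoint]
      adjacent_components_if_common_boundary_bond[OF z z' disjoint] by blast
qed

theorem proposition3p1:
  fixes \<omega> :: "(real^'n) set \<Rightarrow> bool"
  assumes "CARD('n) \<ge> 2"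
  shows "(\<forall>C\<in>finite_dual_clusters \<omega>. \<exists>!D. hole \<omega> D \<and> D \<inter> dual_verts = C)
    \<and> bij_betw (hole_of \<omega>) (finite_dual_clusters \<omega>) {D. hole \<omega> D}
    \<and> (\<forall>C\<in>finite_dual_clusters \<omega>. \<forall>C'\<in>finite_dual_clusters \<omega>. C \<noteq> C' \<longrightarrow>
         (adjacent_holes \<omega> (hole_of \<omega> C) (hole_of \<omega> C') \<longleftrightarrow>
          edge_boundary C \<inter> edge_boundary C' \<noteq> {}))"
proof (intro conjI ballI impI)
  fix C assume C: "C \<in> finite_dual_clusters \<omega>"
  show "\<exists>!D. hole \<omega> D \<and> D \<inter> dual_verts = C"
  proof (rule ex1I)
    show "hole \<omega> (hole_of \<omega> C) \<and> hole_of \<omega> C \<inter> dual_verts = C"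
      using hole_of_finite_dual_cluster[OF C] .
  qed (use Int_dual_verts_of_hole in blast)
next
  show "bij_betw (hole_of \<omega>) (finite_dual_clusters \<omega>) {D. hole \<omega> D}"
  proof (rule bij_betw_byWitness[where f' = "\<lambda>D. D \<inter> dual_verts"])
    show "\<forall>C\<in>finite_dual_clusters \<omega>. hole_of \<omega> C \<inter> dual_verts = C"
      "hole_of \<omega> ` finite_dual_clusters \<omega> \<subseteq> {D. hole \<omega> D}"
      using hole_of_finite_dual_cluster by blast+
    show "\<forall>D\<in>{D. hole \<omega> D}. hole_of \<omega> (D \<inter> dual_verts) = D"
      "(\<lambda>D. D \<inter> dual_verts) ` {D. hole \<omega> D} \<subseteq> finite_dual_clusters \<omega>"
      using Int_dual_verts_of_hole by blast+
  qed
next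
  fix C C' assume "C \<in> finite_dual_clusters \<omega>" "C' \<in> finite_dual_clusters \<omega>" "C \<noteq> C'"
  then obtain z z' where z: "z \<in> dual_verts" "finite (dual_cluster \<omega> z)" "C = dual_cluster \<omega> z"
    and z': "z' \<in> dual_verts" "finite (dual_cluster \<omega> z')" "C' = dual_cluster \<omega> z'"
    unfolding finite_dual_clusters_def by blast
  then show "adjacent_holes \<omega> (hole_of \<omega> C) (hole_of \<omega> C') \<longleftrightarrow>
      edge_boundary C \<inter> edge_boundary C' \<noteq> {}"
    using adjacent_components_iff_common_boundary_bond[OF z(1) z'(1)] \<open>C \<noteq> C'\<close>
    by (simp add: hole_of_dual_cluster)
qed

end
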